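(* Let $S$ be a numerical semigroup, let $u\in\mathrm U(\mathrm{Betti}(S))$ and $\Lambda=\{b\in\mathrm{Betti}(S): b\le_S u\}$. Then for every $s\in S$ and every $z\in\mathrm B(s;\Lambda)$ there exist $w\in\mathrm I_s(S)$ and $x_1,\dots,x_t\in\mathrm I(\Lambda)$ with $z=w+x_1+\cdots+x_t$, and $w$ together with the multiset $\{x_1,\dots,x_t\}$ is uniquely determined by $z$. Moreover, for every $s\in S$, $$|\mathrm B(s;\Lambda)|=\sum_{j=0}^{q_s}|\mathrm B(s-ju;\Lambda\setminus\{u\})|\binom{\mathrm i(u)+j-1}{j},$$ where $q_s$ is the largest integer with $q_su\le_S s$.
   Context: A numerical semigroup $S$ is a submonoid of $(\mathbb N,+)$ with finite complement, minimally generated by $\{n_1,\dots,n_e\}$. Write $a\le_S b$ if $b-a\in S$. Let $\varphi:\mathbb N^e\to S$, $\varphi(a)=\sum_ia_in_i$; $\mathrm Z(s)=\varphi^{-1}(s)$. $\nabla_s$ is the graph on $\mathrm Z(s)$ with distinct $x,y$ adjacent iff $x\cdot y\ne0$; $s$ is a Betti element if $\nabla_s$ is disconnected; $\mathrm{Betti}(S)$ is the set of Betti elements. For a poset $(X,\le)$, $\mathrm U(X)=\{x\in X: \{y\in X:y\le x\}\text{ is totally ordered}\}$; here $X=(\mathrm{Betti}(S),\le_S)$. A factorization $z\in\mathrm Z(s)$ is isolated if $z\cdot x=0$ for all $x\in\mathrm Z(s)\setminus\{z\}$; $\mathrm I(t)$ is the set of isolated factorizations of $t$, $\mathrm i(t)=|\mathrm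 I(t)|$, and $\mathrm I(\Lambda)=\bigcup_{t\in\Lambda}\mathrm I(t)$. $\mathrm I_s(S)$ is the set of $z\in\mathbb N^e$ such that $\varphi(z)$ has exactly one factorization. For $\Lambda\subseteq S$ and $s\in S$, $\mathrm B(s;\Lambda)=\{w+x_1+\cdots+x_l\in\mathrm Z(s): w\in\mathrm I_s(S),\ l\ge0,\ x_1,\dots,x_l\in\mathrm I(\Lambda)\}$ (with $\mathrm I(\emptyset)=\emptyset$). *)

theory Defs
  imports Main "HOL-Library.Multiset"
begin

text \<open>Numerical semigroups. A factorization (element of N^e) is represented as a
function z :: nat => nat indexed by the minimal generators themselves, vanishing
outside the minimal generating set.\<close>

definition numerical_semigroup :: "nat set \<Rightarrow> bool" where
  "numerical_semigroup S \<longleftrightarrow> 0 \<in> S \<and> (\<forall>a\<in>S. \<forall>b\<in>S. a + b \<in> S) \<and> finite (UNIV - S)"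

definition mingens :: "nat set \<Rightarrow> nat set" where
  "mingens S = {g \<in> S. g \<noteq> 0 \<and>
     \<not> (\<exists>a\<in>S. \<exists>b\<in>S. a \<noteq> 0 \<and> b \<noteq> 0 \<and> g = a + b)}"

definition vecs :: "nat set \<Rightarrow> (nat \<Rightarrow> nat) set" where
  "vecs S = {z. \<forall>g. g \<notin> mingens S \<longrightarrow> z g = 0}"

definition phi :: "nat set \<Rightarrow> (nat \<Rightarrow> nat) \<Rightarrow> nat" where
  "phi S z = (\<Sum>g\<in>mingens S. z g * g)"

definition Z :: "nat set \<Rightarrow> nat \<Rightarrow> (nat \<Rightarrow> nat) set" where
  "Z S s = {z \<in> vecs S. phi S z = s}"

definition dot :: "nat set \<Rightarrow> (nat \<Rightarrow> nat) \<Rightarrow> (nat \<Rightarrow> nat) \<Rightarrow> nat" where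
  "dot S x y = (\<Sum>g\<in>mingens S. x g * y g)"

definition nabla_edges :: "nat set \<Rightarrow> nat \<Rightarrow> ((nat \<Rightarrow> nat) \<times> (nat \<Rightarrow> nat)) set" where
  "nabla_edges S s = {(x, y). x \<in> Z S s \<and> y \<in> Z S s \<and> x \<noteq> y \<and> dot S x y \<noteq> 0}"

definition nabla_connected :: "nat set \<Rightarrow> nat \<Rightarrow> bool" where
  "nabla_connected S s \<longleftrightarrow> (\<forall>x\<in>Z S s. \<forall>y\<in>Z S s. (x, y) \<in> (nabla_edges S s)\<^sup>*)"

definition Betti :: "nat set \<Rightarrow> nat set" where
  "Betti S = {s \<in> S. \<not> nabla_connected S s}"

definition leS :: "nat set \<Rightarrow> nat \<Rightarrow> nat \<Rightarrow> bool" where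
  "leS S a b \<longleftrightarrow> a \<le> b \<and> b - a \<in> S"

definition U_Betti :: "nat set \<Rightarrow> nat set" where
  "U_Betti S = {x \<in> Betti S. \<forall>y\<in>Betti S. \<forall>y'\<in>Betti S.
      leS S y x \<longrightarrow> leS S y' x \<longrightarrow> leS S y y' \<or> leS S y' y}"

definition isolated :: "nat set \<Rightarrow> nat \<Rightarrow> (nat \<Rightarrow> nat) \<Rightarrow> bool" where
  "isolated S t z \<longleftrightarrow> z \<in> Z S t \<and> (\<forall>x \<in> Z S t - {z}. dot S z x = 0)"

definition Iso :: "nat set \<Rightarrow> nat \<Rightarrow> (nat \<Rightarrow> nat) set" where
  "Iso S t = {z. isolated S t z}"

definition iso_count :: "nat set \<Rightarrow> nat \<Rightarrow> nat" where
  "iso_count S t = card (Iso S t)"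

definition Iso_set :: "nat set \<Rightarrow> nat set \<Rightarrow> (nat \<Rightarrow> nat) set" where
  "Iso_set S \<Lambda> = (\<Union>t\<in>\<Lambda>. Iso S t)"

definition Is :: "nat set \<Rightarrow> (nat \<Rightarrow> nat) set" where
  "Is S = {z \<in> vecs S. card (Z S (phi S z)) = 1}"

definition vsum :: "(nat \<Rightarrow> nat) \<Rightarrow> (nat \<Rightarrow> nat) list \<Rightarrow> nat \<Rightarrow> nat" where
  "vsum w xs = (\<lambda>g. w g + (\<Sum>x\<leftarrow>xs. x g))"

definition B :: "nat set \<Rightarrow> nat \<Rightarrow> nat set \<Rightarrow> (nat \<Rightarrow> nat) set" where
  "B S s \<Lambda> = {z \<in> Z S s. \<exists>w\<in>Is S. \<exists>xs. set xs \<subseteq> Iso_set S \<Lambda> \<and> z = vsum w xs}"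

definition qmax :: "nat set \<Rightarrow> nat \<Rightarrow> nat \<Rightarrow> nat" where
  "qmax S u s = (GREATEST q. leS S (q * u) s)"

end

theory Submission
  imports Defs "HOL-Library.Function_Algebras"
begin

(*
  Isolated factorizations of the elements of a chain of Betti elements have pairwise disjoint
  supports: if isolated factorizations x of t and y of t' with t <=_S t' met, then x plus any
  factorization of t' - t is a factorization of t' meeting y, hence equal to y; so x lies strictly
  below y, which makes x the only factorization of t, impossible for a Betti element. Likewise
  no factorization lying below an element of I_s(S) factors a Betti element. Hence, reading the
  coordinates of w + x_1 + ... + x_t on the support of an isolated factorization x recovers the
  multiplicity of x, and then w. For the count, the summands from I(u) split off: z = z' + M with
  z' in B(s - j u; Lambda - {u}) and M a multiset of j elements of I(u); by uniqueness this is a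
  bijection, and there are binomial(i(u) + j - 1, j) such multisets.
*)

lemma numerical_semigroup_zero: "numerical_semigroup S \<Longrightarrow> 0 \<in> S"
  unfolding numerical_semigroup_def by blast

lemma numerical_semigroup_add: "numerical_semigroup S \<Longrightarrow> a \<in> S \<Longrightarrow> b \<in> S \<Longrightarrow> a + b \<in> S"
  unfolding numerical_semigroup_def by blast

lemma numerical_semigroup_mult: "numerical_semigroup S \<Longrightarrow> g \<in> S \<Longrightarrow> k * g \<in> S"
  by (induction k) (auto simp: numerical_semigroup_zero numerical_semigroup_add)

lemma numerical_semigroup_sum:
  assumes "numerical_semigroup S" and "\<And>a. a \<in> A \<Longrightarrow> f a \<in> S"
  shows "sum f A \<in> S"
  using assms(2)
  by (induction A rule: infinite_finite_induct)
     (auto simp: numerical_semigroup_zero[OF assms(1)] numerical_semigroup_add[OF assms(1)])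

lemma numerical_semigroup_cofinite:
  assumes "numerical_semigroup S"
  obtains F where "\<And>n. F < n \<Longrightarrow> n \<in> S"
proof -
  have "finite (UNIV - S)" using assms unfolding numerical_semigroup_def by blast
  then obtain F where "\<forall>n\<in>UNIV - S. n < F" using finite_nat_set_iff_bounded by blast
  then show thesis using that by (meson DiffI UNIV_I less_asym)
qed

lemma mingens_in_semigroup: "g \<in> mingens S \<Longrightarrow> g \<in> S"
  unfolding mingens_def by blast

lemma mingens_pos: "g \<in> mingens S \<Longrightarrow> 0 < g"
  unfolding mingens_def by blast

lemma finite_mingens:
  assumes "numerical_semigroup S"
  shows "finite (mingens S)"
proof -
  obtain F where F: "\<And>n. F < n \<Longrightarrow> n \<in> S" using numerical_semigroup_cofinite[OF assms] by blast
  have "g \<le> F + (F + 1)" if g: "g \<in> mingens S" for g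
  proof (rule ccontr)
    assume "\<not> g \<le> F + (F + 1)"
    then have "F < g - (F + 1)" "g = (g - (F + 1)) + (F + 1)" by linarith+
    then have "\<exists>a\<in>S. \<exists>b\<in>S. a \<noteq> 0 \<and> b \<noteq> 0 \<and> g = a + b"
      using F[of "g - (F + 1)"] F[of "F + 1"]
      by (intro bexI[of _ "g - (F + 1)"] bexI[of _ "F + 1"]) auto
    with g show False unfolding mingens_def by blast
  qed
  then have "mingens S \<subseteq> {..F + (F + 1)}" by auto
  then show ?thesis using finite_subset by blast
qed

lemma sum_list_apply: "sum_list xs g = (\<Sum>x\<leftarrow>xs. x g)"
  by (induction xs) auto

lemma vsum_eq: "vsum w xs = w + sum_mset (mset xs)"
  unfolding vsum_def by (simp add: fun_eq_iff sum_list_apply sum_mset_sum_list)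

lemma diff_add_cancel_fun: "(y :: 'a \<Rightarrow> nat) \<le> x \<Longrightarrow> x - y + y = x"
  by (simp add: le_fun_def fun_eq_iff)

lemma vecs_plus: "x \<in> vecs S \<Longrightarrow> y \<in> vecs S \<Longrightarrow> x + y \<in> vecs S"
  unfolding vecs_def by auto

lemma vecs_minus: "x \<in> vecs S \<Longrightarrow> x - y \<in> vecs S"
  unfolding vecs_def by auto

lemma vecs_sum_mset: "set_mset M \<subseteq> vecs S \<Longrightarrow> sum_mset M \<in> vecs S"
  by (induction M) (auto simp: vecs_def)

lemma phi_plus: "phi S (x + y) = phi S x + phi S y"
  unfolding phi_def by (simp add: sum.distrib add_mult_distrib)

lemma phi_in_semigroup: "numerical_semigroup S \<Longrightarrow> phi S z \<in> S"
  unfolding phi_def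
  by (simp add: numerical_semigroup_sum numerical_semigroup_mult mingens_in_semigroup)

lemma component_le_phi:
  assumes "numerical_semigroup S" and "g \<in> mingens S"
  shows "z g * g \<le> phi S z"
  unfolding phi_def by (rule member_le_sum) (use assms finite_mingens in auto)

lemma Z_plus: "x \<in> Z S a \<Longrightarrow> y \<in> Z S b \<Longrightarrow> x + y \<in> Z S (a + b)"
  unfolding Z_def by (simp add: vecs_plus phi_plus)

lemma Z_nonempty:
  assumes NS: "numerical_semigroup S" and "s \<in> S"
  shows "Z S s \<noteq> {}"
  using assms(2)
proof (induction s rule: less_induct)
  case (less s)
  consider "s = 0" | "s \<in> mingens S" | a b where "a \<in> S" "b \<in> S" "0 < a" "0 < b" "s = a + b"
    using less.prems unfolding mingens_def by blast
  then show ?case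
  proof cases
    case 1
    have "0 \<in> Z S 0" by (simp add: Z_def vecs_def phi_def)
    with 1 show ?thesis by blast
  next
    case 2
    let ?e = "\<lambda>h. if h = s then 1 else 0 :: nat"
    have "phi S ?e = (\<Sum>g\<in>mingens S. if g = s then s else 0)"
      unfolding phi_def by (intro sum.cong) auto
    then have "phi S ?e = s" using 2 finite_mingens[OF NS] by simp
    moreover have "?e \<in> vecs S" using 2 unfolding vecs_def by auto
    ultimately show ?thesis unfolding Z_def by blast
  next
    case 3
    then have "Z S a \<noteq> {}" "Z S b \<noteq> {}" using less.IH by simp_all
    then obtain x y where "x \<in> Z S a" "y \<in> Z S b" by blast
    then show ?thesis using Z_plus 3(5) by blast
  qed
qed

lemma finite_Z:
  assumes NS: "numerical_semigroup S"
  shows "finite (Z S s)"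
proof -
  have "Z S s \<subseteq> {f. \<forall>g. (g \<in> mingens S \<longrightarrow> f g \<in> {0..s}) \<and> (g \<notin> mingens S \<longrightarrow> f g = 0)}"
  proof (intro subsetI CollectI allI conjI impI)
    fix z g assume z: "z \<in> Z S s"
    show "z g = 0" if "g \<notin> mingens S" using z that unfolding Z_def vecs_def by auto
    assume g: "g \<in> mingens S"
    then have "z g \<le> z g * g" "z g * g \<le> phi S z"
      using mingens_pos[OF g] component_le_phi[OF NS g] by auto
    then have "z g \<le> phi S z" by (rule le_trans)
    then show "z g \<in> {0..s}" using z unfolding Z_def by simp
  qed
  then show ?thesis
    using finite_set_of_finite_funs[OF finite_mingens[OF NS] finite_atLeastAtMost] finite_subset
    by blast
qed

lemma Z_zero:
  assumes "numerical_semigroup S"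
  shows "Z S 0 = {0}"
proof -
  have "z g = 0" if z: "z \<in> Z S 0" for z g
    using z component_le_phi[OF assms, of g z] mingens_pos[of g S]
    unfolding Z_def vecs_def by (cases "g \<in> mingens S") auto
  then show ?thesis by (auto simp: Z_def vecs_def phi_def)
qed

lemma Betti_two_factorizations:
  assumes "t \<in> Betti S"
  obtains a b where "a \<in> Z S t" "b \<in> Z S t" "a \<noteq> b"
  using assms unfolding Betti_def nabla_connected_def by blast

lemma Betti_pos:
  assumes "numerical_semigroup S" and "t \<in> Betti S"
  shows "0 < t"
  using Betti_two_factorizations[OF assms(2)] Z_zero[OF assms(1)] by (metis gr0I singletonD)

lemma single_factorization_not_Betti:
  assumes "\<And>x'. x' \<in> Z S (phi S x) \<Longrightarrow> x' = x"
  shows "phi S x \<notin> Betti S"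
  using assms Betti_two_factorizations by metis

lemma dot_nonzero:
  assumes "numerical_semigroup S" and "x \<in> vecs S" and "0 < x g" and "0 < y g"
  shows "dot S x y \<noteq> 0"
proof -
  have "g \<in> mingens S" using assms(2,3) unfolding vecs_def by (cases "g \<in> mingens S") auto
  then have "x g * y g \<le> dot S x y"
    unfolding dot_def by (rule member_le_sum) (use finite_mingens[OF assms(1)] in auto)
  then show ?thesis using assms(3,4) by (metis mult_pos_pos not_le)
qed

lemma exchange_factorization:
  assumes "x \<in> vecs S" and "y \<le> x" and "y' \<in> Z S (phi S y)"
  shows "x - y + y' \<in> Z S (phi S x)"
proof -
  have "phi S (x - y + y') = phi S (x - y + y)" using assms(3) by (simp add: phi_plus Z_def)
  also have "\<dots> = phi S x" by (simp add: diff_add_cancel_fun[OF assms(2)])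
  finally show ?thesis using assms unfolding Z_def by (simp add: vecs_plus vecs_minus)
qed

lemma Is_Z:
  assumes "w \<in> Is S"
  shows "Z S (phi S w) = {w}"
proof -
  have "card (Z S (phi S w)) = 1" "w \<in> Z S (phi S w)" using assms unfolding Is_def Z_def by auto
  then show ?thesis by (metis card_1_singletonE singletonD)
qed

lemma below_Is_not_Betti:
  assumes w: "w \<in> Is S" and "y \<le> w"
  shows "phi S y \<notin> Betti S"
proof (rule single_factorization_not_Betti)
  fix y' assume "y' \<in> Z S (phi S y)"
  then have "w - y + y' \<in> Z S (phi S w)"
    using w by (intro exchange_factorization[OF _ \<open>y \<le> w\<close>]) (simp_all add: Is_def)
  then have "w - y + y' = w - y + y" using Is_Z[OF w] diff_add_cancel_fun[OF \<open>y \<le> w\<close>] by simp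
  then show "y' = y" by simp
qed

lemma Iso_Z: "x \<in> Iso S t \<Longrightarrow> x \<in> Z S t"
  unfolding Iso_def isolated_def by simp

lemma isolated_eq_if_common_support:
  assumes "numerical_semigroup S" and y: "y \<in> Iso S t" and v: "v \<in> Z S t"
    and "0 < y g" and "0 < v g"
  shows "v = y"
proof (rule ccontr)
  assume "v \<noteq> y"
  with y v have "dot S y v = 0" unfolding Iso_def isolated_def by auto
  moreover have "y \<in> vecs S" using Iso_Z[OF y] unfolding Z_def by simp
  ultimately show False using dot_nonzero[OF assms(1), of y g v] assms(4,5) by simp
qed

lemma below_Iso_not_Betti:
  assumes NS: "numerical_semigroup S" and y: "y \<in> Iso S t" and "x \<le> y" and "x \<noteq> y"
  shows "phi S x \<notin> Betti S"
proof (rule single_factorization_not_Betti)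
  fix x' assume x': "x' \<in> Z S (phi S x)"
  have yZ: "y \<in> Z S t" using Iso_Z[OF y] .
  obtain g where "x g \<noteq> y g" using \<open>x \<noteq> y\<close> by (meson ext)
  then have "x g < y g" using le_funD[OF \<open>x \<le> y\<close>, of g] by simp
  moreover have "y - x + x' \<in> Z S t"
    using exchange_factorization[OF _ \<open>x \<le> y\<close> x'] yZ unfolding Z_def by simp
  ultimately have "y - x + x' = y"
    by (intro isolated_eq_if_common_support[OF NS y, of _ g]) simp_all
  then have "y - x + x' = y - x + x" using diff_add_cancel_fun[OF \<open>x \<le> y\<close>] by simp
  then show "x' = x" by simp
qed

lemma isolated_supports_disjoint:
  assumes NS: "numerical_semigroup S" and x: "x \<in> Iso S t" and y: "y \<in> Iso S t'"
    and "leS S t t'" and "t \<noteq> t'" and "t \<in> Betti S"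
  shows "x g = 0 \<or> y g = 0"
proof (rule ccontr)
  assume "\<not> ?thesis"
  then have pos: "0 < x g" "0 < y g" by auto
  have xZ: "x \<in> Z S t" and yZ: "y \<in> Z S t'" using Iso_Z x y by auto
  obtain v where "v \<in> Z S (t' - t)"
    using Z_nonempty[OF NS] \<open>leS S t t'\<close> unfolding leS_def by blast
  then have "x + v \<in> Z S t'" using Z_plus[OF xZ] \<open>leS S t t'\<close> unfolding leS_def by fastforce
  then have "x + v = y" using pos by (intro isolated_eq_if_common_support[OF NS y, of _ g]) simp_all
  then have "x \<le> y" by (auto simp: le_fun_def)
  moreover have "x \<noteq> y" using xZ yZ \<open>t \<noteq> t'\<close> unfolding Z_def by auto
  ultimately have "phi S x \<notin> Betti S" by (rule below_Iso_not_Betti[OF NS y])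
  then show False using xZ \<open>t \<in> Betti S\<close> unfolding Z_def by simp
qed

definition Betti_chain :: "nat set \<Rightarrow> nat set \<Rightarrow> bool" where
  "Betti_chain S L \<longleftrightarrow> L \<subseteq> Betti S \<and> (\<forall>a\<in>L. \<forall>b\<in>L. leS S a b \<or> leS S b a)"

lemma Iso_set_vecs: "x \<in> Iso_set S L \<Longrightarrow> x \<in> vecs S"
  unfolding Iso_set_def using Iso_Z unfolding Z_def by blast

lemma phi_Iso_set: "x \<in> Iso_set S L \<Longrightarrow> phi S x \<in> L"
  unfolding Iso_set_def using Iso_Z unfolding Z_def by blast

lemma Iso_set_supports_disjoint:
  assumes NS: "numerical_semigroup S" and "Betti_chain S L"
    and x: "x \<in> Iso_set S L" and y: "y \<in> Iso_set S L" and "x \<noteq> y"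
  shows "x g = 0 \<or> y g = 0"
proof -
  obtain t t' where t: "t \<in> L" "x \<in> Iso S t" and t': "t' \<in> L" "y \<in> Iso S t'"
    using x y unfolding Iso_set_def by blast
  show ?thesis
  proof (cases "t = t'")
    case True
    then show ?thesis
      using isolated_eq_if_common_support[OF NS t(2), of y g] t'(2) \<open>x \<noteq> y\<close>
      using Iso_Z by blast
  next
    case False
    then have "leS S t t' \<or> leS S t' t" "t \<in> Betti S" "t' \<in> Betti S"
      using \<open>Betti_chain S L\<close> t t' unfolding Betti_chain_def by auto
    then show ?thesis
      using isolated_supports_disjoint[OF NS t(2) t'(2), where g = g]
        isolated_supports_disjoint[OF NS t'(2) t(2), where g = g]
        False by auto
  qed
qed

lemma sum_mset_apply_single_support:
  assumes "\<And>y. y \<in># M \<Longrightarrow> y \<noteq> x \<Longrightarrow> y g = 0"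
  shows "sum_mset M g = count M x * (x g :: nat)"
  using assms by (induction M) auto

text \<open>On the support of x all other isolated factorizations vanish, so a larger multiplicity
  of x on the right-hand side forces x below w there.\<close>

lemma decomposition_count_le:
  assumes NS: "numerical_semigroup S" and ch: "Betti_chain S L" and w: "w \<in> Is S"
    and M: "set_mset M \<subseteq> Iso_set S L" and M': "set_mset M' \<subseteq> Iso_set S L"
    and eq: "w + sum_mset M = w' + sum_mset M'" and x: "x \<in> Iso_set S L"
  shows "count M' x \<le> count M x"
proof (rule ccontr)
  assume "\<not> ?thesis"
  then have lt: "count M x < count M' x" by simp
  have "x h \<le> w h" for h
  proof (cases "x h = 0")
    case False
    have "y h = 0" if "y \<in> Iso_set S L" "y \<noteq> x" for y
      using Iso_set_supports_disjoint[OF NS ch that(1) x that(2), of h] False by simp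
    then have "sum_mset M h = count M x * x h" "sum_mset M' h = count M' x * x h"
      using M M' by (auto intro: sum_mset_apply_single_support)
    moreover have "w h + sum_mset M h = w' h + sum_mset M' h" using fun_cong[OF eq, of h] by simp
    moreover have "(count M x + 1) * x h \<le> count M' x * x h" using lt by (intro mult_right_mono) auto
    ultimately show ?thesis by (simp add: algebra_simps)
  qed simp
  then have "phi S x \<notin> Betti S" using below_Is_not_Betti[OF w] by (simp add: le_fun_def)
  then show False using phi_Iso_set[OF x] ch unfolding Betti_chain_def by blast
qed

lemma decomposition_unique:
  assumes NS: "numerical_semigroup S" and ch: "Betti_chain S L"
    and w: "w \<in> Is S" and w': "w' \<in> Is S"
    and M: "set_mset M \<subseteq> Iso_set S L" and M': "set_mset M' \<subseteq> Iso_set S L"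
    and eq: "w + sum_mset M = w' + sum_mset M'"
  shows "w = w' \<and> M = M'"
proof -
  have "M = M'"
  proof (rule multiset_eqI)
    fix x show "count M x = count M' x"
    proof (cases "x \<in> Iso_set S L")
      case True
      then show ?thesis using decomposition_count_le[OF NS ch w M M' eq]
          decomposition_count_le[OF NS ch w' M' M eq[symmetric]] by fastforce
    next
      case False
      then show ?thesis using M M' by (metis count_eq_zero_iff subsetD)
    qed
  qed
  then show ?thesis using eq by simp
qed

lemma B_eq_mset:
  "B S s L = {z \<in> Z S s. \<exists>w\<in>Is S. \<exists>M. set_mset M \<subseteq> Iso_set S L \<and> z = w + sum_mset M}"
proof -
  have "(\<exists>xs. set xs \<subseteq> A \<and> z = w + sum_mset (mset xs)) \<longleftrightarrow>
        (\<exists>M. set_mset M \<subseteq> A \<and> z = w + sum_mset M)" for A z and w :: "nat \<Rightarrow> nat"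
    by (metis ex_mset set_mset_mset)
  then show ?thesis unfolding B_def vsum_eq by simp
qed

lemma finite_B: "numerical_semigroup S \<Longrightarrow> finite (B S s L)"
  using finite_Z unfolding B_def by (simp add: finite_subset)

lemma leS_mult_iff_le_qmax:
  assumes NS: "numerical_semigroup S" and "u \<in> S" "0 < u" and "s \<in> S"
  shows "leS S (j * u) s \<longleftrightarrow> j \<le> qmax S u s"
proof -
  let ?P = "\<lambda>q. leS S (q * u) s" and ?q = "qmax S u s"
  have bound: "q \<le> s" if "?P q" for q
  proof -
    have "q \<le> q * u" using \<open>0 < u\<close> by simp
    also have "\<dots> \<le> s" using that unfolding leS_def by simp
    finally show ?thesis .
  qed
  have "?P 0" using \<open>s \<in> S\<close> unfolding leS_def by simp
  then have Pq: "?P ?q" unfolding qmax_def using bound by (rule GreatestI_nat)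
  show ?thesis
  proof
    assume "?P j" then show "j \<le> ?q" unfolding qmax_def using bound by (rule Greatest_le_nat)
  next
    assume "j \<le> ?q"
    then have ju: "j * u \<le> ?q * u" by (rule mult_le_mono1)
    moreover have qu: "?q * u \<le> s" using Pq unfolding leS_def by simp
    ultimately have "j * u \<le> s" by (rule le_trans)
    moreover have "s - j * u = (s - ?q * u) + (?q - j) * u"
      using ju qu by (simp add: diff_mult_distrib)
    moreover have "(s - ?q * u) + (?q - j) * u \<in> S"
      using Pq numerical_semigroup_add[OF NS] numerical_semigroup_mult[OF NS \<open>u \<in> S\<close>]
      unfolding leS_def by blast
    ultimately show "?P j" unfolding leS_def by simp
  qed
qed

lemma sum_mset_Iso:
  assumes "set_mset M \<subseteq> Iso S u"
  shows "sum_mset M \<in> Z S (size M * u)"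
  using assms
proof (induction M)
  case empty
  show ?case by (simp add: Z_def vecs_def phi_def)
next
  case (add x M)
  then have "x \<in> Z S u" "sum_mset M \<in> Z S (size M * u)" using Iso_Z by simp_all
  then have "x + sum_mset M \<in> Z S (u + size M * u)" by (rule Z_plus)
  then show ?case by (simp only: sum_mset.add_mset size_add_mset mult_Suc)
qed

lemma Iso_set_Diff_disjoint: "Iso_set S (L - {u}) \<inter> Iso S u = {}"
proof -
  have "t = u" if "x \<in> Iso S t" "x \<in> Iso S u" for x t
    using that Iso_Z unfolding Z_def by blast
  then show ?thesis unfolding Iso_set_def by blast
qed

lemma B_plus_Iso:
  assumes "u \<in> L" and z: "z \<in> B S t (L - {u})" and M: "set_mset M \<subseteq> Iso S u"
  shows "z + sum_mset M \<in> B S (t + size M * u) L"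
proof -
  obtain w R where w: "w \<in> Is S" "set_mset R \<subseteq> Iso_set S (L - {u})" "z = w + sum_mset R"
    and zZ: "z \<in> Z S t"
    using z unfolding B_eq_mset by blast
  have "z + sum_mset M \<in> Z S (t + size M * u)" using Z_plus[OF zZ sum_mset_Iso[OF M]] .
  moreover have "z + sum_mset M = w + sum_mset (R + M)" using w(3) by (simp add: add.assoc)
  moreover have "set_mset (R + M) \<subseteq> Iso_set S L"
    using w(2) M \<open>u \<in> L\<close> unfolding Iso_set_def by auto
  ultimately show ?thesis unfolding B_eq_mset using w(1) by blast
qed

lemma B_split_off_Iso:
  assumes NS: "numerical_semigroup S" and z: "z \<in> B S s L"
  obtains z' M where "z' \<in> B S (s - size M * u) (L - {u})" and "set_mset M \<subseteq> Iso S u"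
    and "leS S (size M * u) s" and "z = z' + sum_mset M"
proof -
  obtain w N where w: "w \<in> Is S" "set_mset N \<subseteq> Iso_set S L" "z = w + sum_mset N"
    and zZ: "z \<in> Z S s"
    using z unfolding B_eq_mset by blast
  define M where "M = filter_mset (\<lambda>x. x \<in> Iso S u) N"
  define R where "R = filter_mset (\<lambda>x. x \<notin> Iso S u) N"
  have "N = R + M"
    using multiset_partition[of N "\<lambda>x. x \<in> Iso S u"] unfolding M_def R_def by (simp add: add.commute)
  have R: "set_mset R \<subseteq> Iso_set S (L - {u})" using w(2) unfolding R_def Iso_set_def by auto
  have M: "set_mset M \<subseteq> Iso S u" unfolding M_def by auto
  have "w + sum_mset R \<in> vecs S"
    using w(1) R Iso_set_vecs by (auto simp: Is_def intro!: vecs_plus vecs_sum_mset)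
  moreover have z_eq: "z = (w + sum_mset R) + sum_mset M" using w(3) \<open>N = R + M\<close> by (simp add: add.assoc)
  then have "s = phi S (w + sum_mset R) + size M * u"
    using zZ sum_mset_Iso[OF M] unfolding Z_def by (simp add: phi_plus)
  ultimately have "w + sum_mset R \<in> B S (s - size M * u) (L - {u})" and "leS S (size M * u) s"
    using w(1) R phi_in_semigroup[OF NS] unfolding B_eq_mset Z_def leS_def by auto
  then show thesis using that M z_eq by blast
qed

lemma B_split_Iso:
  assumes NS: "numerical_semigroup S" and "u \<in> L" and "u \<in> Betti S" and "s \<in> S"
  shows "B S s L = (\<lambda>(z, M). z + sum_mset M) `
           (\<Union>j\<in>{0..qmax S u s}. B S (s - j * u) (L - {u}) \<times> multisets_of_size (Iso S u) j)"
    (is "_ = ?F ` ?D")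
proof -
  have "u \<in> S" "0 < u" using assms(3) Betti_pos[OF NS] unfolding Betti_def by auto
  note qmax = leS_mult_iff_le_qmax[OF NS this \<open>s \<in> S\<close>]
  show ?thesis
  proof (intro equalityI subsetI)
    fix z assume "z \<in> B S s L"
    then obtain z' M where "z' \<in> B S (s - size M * u) (L - {u})" "set_mset M \<subseteq> Iso S u"
      "leS S (size M * u) s" "z = z' + sum_mset M"
      using B_split_off_Iso[OF NS] by metis
    then show "z \<in> ?F ` ?D"
      using qmax by (intro image_eqI[of _ _ "(z', M)"]) (auto simp: multisets_of_size_def)
  next
    fix z assume "z \<in> ?F ` ?D"
    then obtain j z' M where "j \<le> qmax S u s" and z': "z' \<in> B S (s - j * u) (L - {u})"
      and M: "set_mset M \<subseteq> Iso S u" "size M = j" and z: "z = z' + sum_mset M"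
      by (auto simp: multisets_of_size_def)
    then have "leS S (j * u) s" using qmax by blast
    then have "s - j * u + size M * u = s" using M(2) unfolding leS_def by simp
    then show "z \<in> B S s L" using B_plus_Iso[OF \<open>u \<in> L\<close> z' M(1)] z by simp
  qed
qed

lemma B_plus_Iso_inj:
  assumes NS: "numerical_semigroup S" and ch: "Betti_chain S L" and "u \<in> L"
    and z1: "z1 \<in> B S t1 (L - {u})" and z2: "z2 \<in> B S t2 (L - {u})"
    and M1: "set_mset M1 \<subseteq> Iso S u" and M2: "set_mset M2 \<subseteq> Iso S u"
    and eq: "z1 + sum_mset M1 = z2 + sum_mset M2"
  shows "z1 = z2 \<and> M1 = M2"
proof -
  obtain w1 R1 where w1: "w1 \<in> Is S" "set_mset R1 \<subseteq> Iso_set S (L - {u})" "z1 = w1 + sum_mset R1"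
    using z1 unfolding B_eq_mset by blast
  obtain w2 R2 where w2: "w2 \<in> Is S" "set_mset R2 \<subseteq> Iso_set S (L - {u})" "z2 = w2 + sum_mset R2"
    using z2 unfolding B_eq_mset by blast
  have "Iso_set S (L - {u}) \<union> Iso S u \<subseteq> Iso_set S L" using \<open>u \<in> L\<close> unfolding Iso_set_def by auto
  then have "set_mset (R1 + M1) \<subseteq> Iso_set S L" "set_mset (R2 + M2) \<subseteq> Iso_set S L"
    using w1(2) w2(2) M1 M2 by auto
  moreover have "w1 + sum_mset (R1 + M1) = w2 + sum_mset (R2 + M2)"
    using eq w1(3) w2(3) by (simp add: add.assoc)
  ultimately have w: "w1 = w2" and R_M: "R1 + M1 = R2 + M2"
    using decomposition_unique[OF NS ch w1(1) w2(1)] by blast+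
  have "filter_mset (\<lambda>x. x \<in> Iso S u) (R + M) = M"
    if "set_mset R \<subseteq> Iso_set S (L - {u})" "set_mset M \<subseteq> Iso S u" for R M
  proof -
    have "filter_mset (\<lambda>x. x \<in> Iso S u) R = {#}"
      using that(1) Iso_set_Diff_disjoint[of S L u] by auto
    moreover have "filter_mset (\<lambda>x. x \<in> Iso S u) M = M"
      using that(2) by (auto simp: filter_mset_eq_conv)
    ultimately show ?thesis by simp
  qed
  then have "M1 = M2" using R_M w1(2) w2(2) M1 M2 by metis
  then show ?thesis using R_M w w1(3) w2(3) by simp
qed

lemma card_B_split_Iso:
  assumes NS: "numerical_semigroup S" and ch: "Betti_chain S L" and "u \<in> L" and "s \<in> S"
  shows "card (B S s L) = (\<Sum>j=0..qmax S u s. card (B S (s - j * u) (L - {u})) *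
           ((iso_count S u + j - 1) choose j))"
proof -
  let ?F = "\<lambda>(z, M). z + sum_mset M"
  let ?D = "\<lambda>j. B S (s - j * u) (L - {u}) \<times> multisets_of_size (Iso S u) j"
  have "finite (Iso S u)"
    using finite_Z[OF NS] Iso_Z by (meson finite_subset subsetI)
  have "inj_on ?F (\<Union>j\<in>{0..qmax S u s}. ?D j)"
  proof (rule inj_onI)
    fix p q assume "p \<in> (\<Union>j\<in>{0..qmax S u s}. ?D j)" "q \<in> (\<Union>j\<in>{0..qmax S u s}. ?D j)"
      and eq: "?F p = ?F q"
    then obtain z1 M1 z2 M2 i j where "p = (z1, M1)" "q = (z2, M2)" "(z1, M1) \<in> ?D i" "(z2, M2) \<in> ?D j"
      by auto
    then show "p = q" using eq B_plus_Iso_inj[OF NS ch \<open>u \<in> L\<close>, of z1 _ z2 _ M1 M2]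
      unfolding multisets_of_size_def by auto
  qed
  moreover have "u \<in> Betti S" using ch \<open>u \<in> L\<close> unfolding Betti_chain_def by blast
  ultimately have "card (B S s L) = card (\<Union>j\<in>{0..qmax S u s}. ?D j)"
    by (simp add: B_split_Iso[OF NS \<open>u \<in> L\<close> _ \<open>s \<in> S\<close>] card_image)
  also have "\<dots> = (\<Sum>j=0..qmax S u s. card (?D j))"
  proof (rule card_UN_disjoint)
    show "\<forall>j\<in>{0..qmax S u s}. finite (?D j)"
      using finite_B[OF NS] finite_multisets_of_size[OF \<open>finite (Iso S u)\<close>] by blast
    show "\<forall>i\<in>{0..qmax S u s}. \<forall>j\<in>{0..qmax S u s}. i \<noteq> j \<longrightarrow> ?D i \<inter> ?D j = {}"
      unfolding multisets_of_size_def by blast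
  qed simp
  also have "\<dots> = (\<Sum>j=0..qmax S u s. card (B S (s - j * u) (L - {u})) *
           ((iso_count S u + j - 1) choose j))"
    using card_multisets_of_size[OF \<open>finite (Iso S u)\<close>]
    by (simp add: card_cartesian_product iso_count_def)
  finally show ?thesis .
qed

theorem lemma5p14:
  fixes S :: "nat set" and u :: nat and \<Lambda> :: "nat set"
  assumes "numerical_semigroup S"
    and "u \<in> U_Betti S"
    and "\<Lambda> = {b \<in> Betti S. leS S b u}"
  shows "(\<forall>s\<in>S. \<forall>z\<in>B S s \<Lambda>.
            (\<exists>w\<in>Is S. \<exists>xs. set xs \<subseteq> Iso_set S \<Lambda> \<and> z = vsum w xs) \<and>
            (\<forall>w w' xs xs'. w \<in> Is S \<longrightarrow> w' \<in> Is S \<longrightarrow>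
                set xs \<subseteq> Iso_set S \<Lambda> \<longrightarrow> set xs' \<subseteq> Iso_set S \<Lambda> \<longrightarrow>
                z = vsum w xs \<longrightarrow> z = vsum w' xs' \<longrightarrow> w = w' \<and> mset xs = mset xs'))
       \<and> (\<forall>s\<in>S. card (B S s \<Lambda>) =
            (\<Sum>j=0..qmax S u s. card (B S (s - j * u) (\<Lambda> - {u})) *
                ((iso_count S u + j - 1) choose j)))"
proof -
  have "u \<in> Betti S" using assms(2) unfolding U_Betti_def by blast
  then have "u \<in> \<Lambda>" using assms(1,3) numerical_semigroup_zero unfolding leS_def by auto
  have ch: "Betti_chain S \<Lambda>"
    using assms(2,3) unfolding Betti_chain_def U_Betti_def by blast
  have unique: "w = w' \<and> mset xs = mset xs'"
    if "w \<in> Is S" "w' \<in> Is S" "set xs \<subseteq> Iso_set S \<Lambda>" "set xs' \<subseteq> Iso_set S \<Lambda>"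
      "vsum w xs = vsum w' xs'" for w w' xs xs'
    using decomposition_unique[OF assms(1) ch, of w w' "mset xs" "mset xs'"] that
    by (simp add: vsum_eq)
  show ?thesis
  proof (intro conjI ballI)
    fix s z assume "z \<in> B S s \<Lambda>"
    then show "\<exists>w\<in>Is S. \<exists>xs. set xs \<subseteq> Iso_set S \<Lambda> \<and> z = vsum w xs" unfolding B_def by blast
  next
    fix s z
    show "\<forall>w w' xs xs'. w \<in> Is S \<longrightarrow> w' \<in> Is S \<longrightarrow>
                set xs \<subseteq> Iso_set S \<Lambda> \<longrightarrow> set xs' \<subseteq> Iso_set S \<Lambda> \<longrightarrow>
                z = vsum w xs \<longrightarrow> z = vsum w' xs' \<longrightarrow> w = w' \<and> mset xs = mset xs'"
      using unique by metis
  next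
    fix s assume "s \<in> S"
    then show "card (B S s \<Lambda>) = (\<Sum>j=0..qmax S u s. card (B S (s - j * u) (\<Lambda> - {u})) *
                ((iso_count S u + j - 1) choose j))"
      by (rule card_B_split_Iso[OF assms(1) ch \<open>u \<in> \<Lambda>\<close>])
  qed
qed

end
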